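(* Let $V^{2n}$ be a real vector space with $J\in\mathrm{Aut}(V)$, $J^2=-I$, and a positive definite inner product $(\,,\,)$ for which $J$ is an isometry. Let $\mathbb{L}^p$, $p\geq 2$, be a real vector space with a Lorentzian inner product $\langle\,,\,\rangle$, let $\alpha\colon V^{2n}\times V^{2n}\to\mathbb{L}^p$ be a symmetric bilinear form, and suppose there is a light-like vector $w\in\mathbb{L}^p$ with $\langle\alpha(X,Y),w\rangle=-(X,Y)$ for all $X,Y\in V^{2n}$. Let $\beta\colon V^{2n}\times V^{2n}\to W^{p,p}$ be the associated form (see context), assume $\beta$ is flat and that $\mathcal{S}(\beta)$ is degenerate, and let $v\in U_0^s$ be a light-like vector with $\mathcal{S}(\beta)\cap\mathcal{S}(\beta)^\perp=\mathrm{span}\{v\}\oplus\mathrm{span}\{v\}$. Then $L=\mathrm{span}\{v,w\}\subset\mathbb{L}^p$ is a Lorentzian plane. Moreover, normalizing $v$ so that $\langle v,w\rangle=-1$ and setting $\beta_1=\pi_{L^\perp\times L^\perp}\circ\beta$, we have $$\beta(X,Y)=\beta_1(X,Y)+2\big((X,Y)v,(X,JY)v\big)\quad\text{for all }X,Y\in V^{2n}.$$ Furthermore, if $s\leq n$ then $\dim\mathcal{N}(\beta_1)\geq 2n-2s+2$.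
   Context: $W^{p,p}=\mathbb{L}^p\oplus\mathbb{L}^p$ carries the inner product $\langle\!\langle(\xi,\bar\xi),(\eta,\bar\eta)\rangle\!\rangle=\langle\xi,\eta\rangle-\langle\bar\xi,\bar\eta\rangle$. The associated form is $\beta(X,Y)=(\alpha(X,Y)+\alpha(JX,JY),\ \alpha(X,JY)-\alpha(JX,Y))$. $\beta$ is flat if $\langle\!\langle\beta(X,Y),\beta(Z,T)\rangle\!\rangle-\langle\!\langle\beta(X,T),\beta(Z,Y)\rangle\!\rangle=0$ for all $X,Y,Z,T$. $\mathcal{S}(\beta)=\mathrm{span}\{\beta(X,Y):X,Y\in V\}$; a subspace $S$ of $W^{p,p}$ is degenerate if $S\cap S^\perp\neq 0$ ($\perp$ w.r.t. $\langle\!\langle\,,\,\rangle\!\rangle$). $U_0^s=\pi_1(\mathcal{S}(\beta))\subset\mathbb{L}^p$ is the projection of $\mathcal{S}(\beta)$ onto the first factor and $s=\dim U_0^s$ (it is known that $\mathcal S(\beta)=U_0^s\oplus U_0^s$ and that, when $\mathcal S(\beta)$ is degenerate, a light-like $v$ as in the claim exists). $\pi_{L^\perp\times L^\perp}$ is the orthogonal projection of $W^{p,p}$ onto $L^\perp\oplus L^\perp$ (componentwise orthogonal projection onto $L^\perp\subset\mathbb{L}^p$). For a bilinear form $\theta$, $\mathcal{N}(\theta)=\{Y:\theta(X,Y)=0\ \forall X\}$ is its right kernel. *)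

theory Defs
  imports "HOL-Analysis.Analysis"
begin

text \<open>A (possibly indefinite) symmetric form g restricted to a set L is Lorentzian:
  symmetric, nondegenerate on L, and there is a time-like e in L whose g-orthogonal
  complement in L is space-like (i.e. the index of g on L is exactly 1).\<close>
definition lorentzian_on :: "('l::real_vector \<Rightarrow> 'l \<Rightarrow> real) \<Rightarrow> 'l set \<Rightarrow> bool" where
  "lorentzian_on g L \<longleftrightarrow>
     (\<forall>x\<in>L. \<forall>y\<in>L. g x y = g y x) \<and>
     (\<forall>x\<in>L. (\<forall>y\<in>L. g x y = 0) \<longrightarrow> x = 0) \<and>
     (\<exists>e\<in>L. g e e < 0 \<and> (\<forall>x\<in>L. g x e = 0 \<longrightarrow> g x x \<ge> 0))"

definition lorentzian :: "('l::real_vector \<Rightarrow> 'l \<Rightarrow> real) \<Rightarrow> bool" where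
  "lorentzian g \<longleftrightarrow> bilinear g \<and> lorentzian_on g UNIV"

definition lorentzian_plane :: "('l::real_vector \<Rightarrow> 'l \<Rightarrow> real) \<Rightarrow> 'l set \<Rightarrow> bool" where
  "lorentzian_plane g L \<longleftrightarrow> subspace L \<and> dim L = 2 \<and> lorentzian_on g L"

definition wform :: "('l \<Rightarrow> 'l \<Rightarrow> real) \<Rightarrow> 'l \<times> 'l \<Rightarrow> 'l \<times> 'l \<Rightarrow> real" where
  "wform g a b = g (fst a) (fst b) - g (snd a) (snd b)"

definition assoc_form :: "('v \<Rightarrow> 'v) \<Rightarrow> ('v \<Rightarrow> 'v \<Rightarrow> 'l::real_vector) \<Rightarrow> 'v \<Rightarrow> 'v \<Rightarrow> 'l \<times> 'l" where
  "assoc_form J \<alpha> X Y = (\<alpha> X Y + \<alpha> (J X) (J Y), \<alpha> X (J Y) - \<alpha> (J X) Y)"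

definition flat_form :: "('w \<Rightarrow> 'w \<Rightarrow> real) \<Rightarrow> ('v \<Rightarrow> 'v \<Rightarrow> 'w) \<Rightarrow> bool" where
  "flat_form G \<beta> \<longleftrightarrow>
     (\<forall>X Y Z T. G (\<beta> X Y) (\<beta> Z T) - G (\<beta> X T) (\<beta> Z Y) = 0)"

definition form_span :: "('v \<Rightarrow> 'v \<Rightarrow> 'w::real_vector) \<Rightarrow> 'w set" where
  "form_span \<beta> = span {\<beta> X Y | X Y. True}"

definition gperp :: "('w \<Rightarrow> 'w \<Rightarrow> real) \<Rightarrow> 'w set \<Rightarrow> 'w set" where
  "gperp G S = {u. \<forall>x\<in>S. G u x = 0}"

definition degenerate_subspace :: "('w::real_vector \<Rightarrow> 'w \<Rightarrow> real) \<Rightarrow> 'w set \<Rightarrow> bool" where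
  "degenerate_subspace G S \<longleftrightarrow> S \<inter> gperp G S \<noteq> {0}"

definition gproj :: "('l::real_vector \<Rightarrow> 'l \<Rightarrow> real) \<Rightarrow> 'l set \<Rightarrow> 'l \<Rightarrow> 'l" where
  "gproj g U x = (THE y. y \<in> U \<and> (\<forall>u\<in>U. g (x - y) u = 0))"

definition right_kernel :: "('v \<Rightarrow> 'v \<Rightarrow> 'w::zero) \<Rightarrow> 'v set" where
  "right_kernel \<theta> = {Y. \<forall>X. \<theta> X Y = 0}"

end

theory Submission
  imports Defs
begin

text \<open>Since \<open>v\<close> is orthogonal to \<open>\<S>(\<beta>)\<close> while \<open>\<langle>\<beta>(X,X), w\<rangle> = -2|X|\<^sup>2\<close>,
  the null vectors \<open>v\<close> and \<open>w\<close> are not orthogonal and hence span a Lorentzian plane \<open>L\<close>.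
  After normalising \<open>\<langle>v,w\<rangle> = -1\<close> the projection onto \<open>L\<^sup>\<perp>\<close> is
  \<open>x \<mapsto> x + \<langle>x,w\<rangle>v + \<langle>x,v\<rangle>w\<close>, which gives the decomposition of \<open>\<beta>\<close>.
  The form \<open>\<beta>\<^sub>1\<close> is again flat, takes values in the positive definite space
  \<open>L\<^sup>\<perp>\<close>, and its two components are symmetric and skew. For such a form the kernel
  of \<open>\<beta>\<^sub>1(X\<^sub>0,-)\<close>, with \<open>X\<^sub>0\<close> of maximal rank, lies in \<open>\<N>(\<beta>\<^sub>1)\<close>: by maximality
  \<open>\<beta>\<^sub>1(Y,Y)\<close> lies in the image of \<open>\<beta>\<^sub>1(X\<^sub>0,-)\<close>, to which flatness makes it
  orthogonal. The image of \<open>\<beta>\<^sub>1(X\<^sub>0,-)\<close> has dimension at most \<open>2(s-1)\<close>, because the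
  projection kills \<open>v \<in> U\<^sub>0\<^sup>s\<close>, and rank-nullity gives the bound on \<open>\<N>(\<beta>\<^sub>1)\<close>.\<close>

lemma dim_le_dim_kernel_add_dim_range:
  fixes f :: "'a::euclidean_space \<Rightarrow> 'b::euclidean_space"
  assumes f: "linear f"
  shows "DIM('a) \<le> dim {x. f x = 0} + dim (range f)"
proof -
  obtain h where h: "linear h" "\<And>y. y \<in> range f \<Longrightarrow> f (h y) = y"
    using linear_exists_right_inverse_on[OF f subspace_UNIV] by auto
  let ?K = "{x. f x = 0}" and ?H = "h ` range f"
  have sub: "subspace ?K" "subspace ?H"
    by (rule linear_subspace_kernel[OF f])
      (rule linear_subspace_image[OF h(1) linear_subspace_image[OF f subspace_UNIV]])
  have "UNIV \<subseteq> {a + b |a b. a \<in> ?K \<and> b \<in> ?H}"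
  proof
    fix x :: 'a
    have "f (x - h (f x)) = 0" using h(2)[of "f x"] f by (simp add: linear_diff)
    then show "x \<in> {a + b |a b. a \<in> ?K \<and> b \<in> ?H}"
      by (intro CollectI exI[of _ "x - h (f x)"] exI[of _ "h (f x)"]) auto
  qed
  from dim_subset[OF this] have "DIM('a) \<le> dim {a + b |a b. a \<in> ?K \<and> b \<in> ?H}"
    by simp
  also have "\<dots> \<le> dim ?K + dim ?H"
    using dim_sums_Int[OF sub] by linarith
  also have "\<dots> \<le> dim ?K + dim (range f)"
    using dim_image_le[OF h(1)] by simp
  finally show ?thesis .
qed

lemma dim_image_less_if_kernel:
  fixes f :: "'a::euclidean_space \<Rightarrow> 'b::euclidean_space"
  assumes f: "linear f" and S: "subspace S" and v: "v \<in> S" "v \<noteq> 0" "f v = 0"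
  shows "dim (f ` S) < dim S"
proof -
  obtain B where B: "{v} \<subseteq> B" "B \<subseteq> S" "independent B" "S \<subseteq> span B"
    by (rule maximal_independent_subset_extend[of "{v}" S]) (use v in auto)
  have finB: "finite B" using B(3) independent_bound_general by blast
  have "f ` S \<subseteq> span (f ` B)"
    using B(4) span_linear_image[OF f, of B] by blast
  also have "\<dots> \<subseteq> span (insert 0 (f ` (B - {v})))"
    using v(3) by (intro span_mono) auto
  finally have "dim (f ` S) \<le> card (f ` (B - {v}))"
    unfolding span_insert_0
    using finB by (intro dim_le_card) auto
  also have "\<dots> < card B"
    using finB B(1) card_image_le[of "B - {v}" f] card_Diff1_less[of B v] by simp
  also have "card B = dim S"
    using B(2-4) by (simp add: dim_unique)
  finally show ?thesis .
qed

lemma inj_on_add_small_multiple: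
  fixes f h :: "'a::euclidean_space \<Rightarrow> 'b::euclidean_space"
  assumes f: "linear f" and h: "linear h" and S: "subspace S" and inj: "inj_on f S"
  shows "\<exists>t>0. inj_on (\<lambda>x. f x + t *\<^sub>R h x) S"
proof -
  have "\<exists>m>0. \<forall>x\<in>S. m * norm x \<le> norm (f x)"
    by (rule injective_imp_isometric[OF closed_subspace[OF S] S])
      (use f inj in \<open>auto simp: linear_conv_bounded_linear linear_injective_on_subspace_0[OF f S]\<close>)
  then obtain m where m: "m > 0" "\<And>x. x \<in> S \<Longrightarrow> m * norm x \<le> norm (f x)"
    by blast
  obtain M where M: "M > 0" "\<And>x. norm (h x) \<le> M * norm x"
    using linear_bounded_pos[OF h] by blast
  define t where "t = m / (2 * M)"
  have t: "t > 0" using m M by (simp add: t_def)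
  have lin: "linear (\<lambda>x. f x + t *\<^sub>R h x)"
    using f h by (intro linear_compose_add linear_compose_scale_right)
  have "inj_on (\<lambda>x. f x + t *\<^sub>R h x) S"
    unfolding linear_injective_on_subspace_0[OF lin S]
  proof (intro ballI impI)
    fix x assume x: "x \<in> S" and "f x + t *\<^sub>R h x = 0"
    then have "f x = - (t *\<^sub>R h x)"
      by (simp add: eq_neg_iff_add_eq_0)
    then have "norm (f x) = t * norm (h x)"
      using t by simp
    also have "\<dots> \<le> t * (M * norm x)"
      using M(2) t by (simp add: mult_left_mono)
    also have "\<dots> = m / 2 * norm x"
      using M by (simp add: t_def)
    finally have "m * norm x \<le> m / 2 * norm x"
      using m(2)[OF x] by linarith
    then show "x = 0"
      using m(1) by simp
  qed
  with t show ?thesis by blast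
qed

lemma bilinear_max_rank_kernel_image:
  fixes F :: "'a::euclidean_space \<Rightarrow> 'b::euclidean_space \<Rightarrow> 'c::euclidean_space"
  assumes F: "bilinear F" and max: "\<And>X. dim (range (F X)) \<le> dim (range (F X0))"
    and Y: "F X0 Y = 0"
  shows "F Z Y \<in> range (F X0)"
proof (rule ccontr)
  let ?Q = "range (F X0)" and ?c = "F Z Y"
  assume c: "?c \<notin> ?Q"
  \<comment> \<open>Then \<open>(q, k) \<mapsto> q + k ?c\<close> is injective on \<open>?Q \<times> \<real>\<close>, hence so is a small perturbation
    of it that factors through \<open>F (X0 + t Z)\<close>; this contradicts the maximality of the rank.\<close>
  have lin: "linear (F X0)" "linear (F Z)"
    using F by (simp_all add: bilinear_def)
  have Q: "subspace ?Q"
    by (rule linear_subspace_image[OF lin(1) subspace_UNIV])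
  have QR: "subspace (?Q \<times> (UNIV :: real set))"
    using Q by (simp add: subspace_Times)
  obtain h where h: "linear h" "\<And>q. q \<in> ?Q \<Longrightarrow> F X0 (h q) = q"
    using linear_exists_right_inverse_on[OF lin(1) subspace_UNIV] by auto
  define lam :: "'c \<times> real \<Rightarrow> 'c" where "lam p = fst p + snd p *\<^sub>R ?c" for p
  have lam: "linear lam"
    by (rule linearI) (auto simp: lam_def algebra_simps)
  have linG: "linear (\<lambda>p. F Z (h (fst p)))"
    using linear_compose[OF linear_compose[OF linear_fst h(1)] lin(2)] by (simp add: o_def)
  have "inj_on lam (?Q \<times> UNIV)"
    unfolding linear_injective_on_subspace_0[OF lam QR]
  proof (intro ballI impI)
    fix p assume p: "p \<in> ?Q \<times> UNIV" and "lam p = 0"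
    then have cp: "snd p *\<^sub>R ?c = - fst p"
      by (simp add: lam_def eq_neg_iff_add_eq_0 add.commute)
    have "snd p = 0"
    proof (rule ccontr)
      assume "snd p \<noteq> 0"
      then have ceq: "?c = (- inverse (snd p)) *\<^sub>R fst p"
        using arg_cong[OF cp, of "\<lambda>x. inverse (snd p) *\<^sub>R x"] by simp
      have "?c \<in> ?Q"
        unfolding ceq by (rule subspace_scale[OF Q]) (use p in auto)
      with c show False by contradiction
    qed
    with cp show "p = 0"
      by (simp add: prod_eq_iff)
  qed
  then obtain t where t: "t > 0"
    and inj: "inj_on (\<lambda>p. lam p + t *\<^sub>R F Z (h (fst p))) (?Q \<times> UNIV)"
    using inj_on_add_small_multiple[OF lam linG QR] by blast
  let ?H = "\<lambda>p. lam p + t *\<^sub>R F Z (h (fst p))"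
  have "?H ` (?Q \<times> UNIV) \<subseteq> range (F (X0 + t *\<^sub>R Z))"
  proof
    fix u assume "u \<in> ?H ` (?Q \<times> UNIV)"
    then obtain q k where q: "q \<in> ?Q" and u: "u = ?H (q, k)"
      by blast
    have "F (X0 + t *\<^sub>R Z) (h q + (k / t) *\<^sub>R Y) = ?H (q, k)"
      using t h(2)[OF q] Y
      by (simp add: lam_def bilinear_ladd[OF F] bilinear_lmul[OF F] bilinear_radd[OF F]
          bilinear_rmul[OF F] algebra_simps)
    then show "u \<in> range (F (X0 + t *\<^sub>R Z))"
      unfolding u by (metis rangeI)
  qed
  then have "dim (?H ` (?Q \<times> UNIV)) \<le> dim ?Q"
    using dim_subset max order_trans by blast
  moreover have "dim (?H ` (?Q \<times> UNIV)) = dim ?Q + 1"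
  proof -
    have linH: "linear ?H"
      using lam linG by (intro linear_compose_add linear_compose_scale_right)
    have "dim (?H ` (?Q \<times> UNIV)) = dim (?Q \<times> (UNIV :: real set))"
      by (rule dim_image_eq[OF linH]) (simp only: span_eq_iff[THEN iffD2, OF QR] inj)
    also have "\<dots> = dim ?Q + 1"
      using dim_Times[OF Q subspace_UNIV[where 'a=real]] by simp
    finally show ?thesis .
  qed
  ultimately show False by simp
qed

definition positive_definite_on :: "('l::real_vector \<Rightarrow> 'l \<Rightarrow> real) \<Rightarrow> 'l set \<Rightarrow> bool" where
  "positive_definite_on g U \<longleftrightarrow> (\<forall>u\<in>U. 0 \<le> g u u \<and> (g u u = 0 \<longrightarrow> u = 0))"

lemma lorentzian_bilinear: "lorentzian g \<Longrightarrow> bilinear g"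
  by (simp add: lorentzian_def)

lemma lorentzian_sym: "lorentzian g \<Longrightarrow> g x y = g y x"
  by (simp add: lorentzian_def lorentzian_on_def)

lemma bilinear_sym_quadratic:
  assumes g: "bilinear g" and sym: "g y x = g x y"
  shows "g (a *\<^sub>R x + b *\<^sub>R y) (a *\<^sub>R x + b *\<^sub>R y) = a\<^sup>2 * g x x + 2 * a * b * g x y + b\<^sup>2 * g y y"
  using sym by (simp add: bilinear_ladd[OF g] bilinear_radd[OF g] bilinear_lmul[OF g]
      bilinear_rmul[OF g] power2_eq_square algebra_simps)

lemma lorentzian_witness_perp_null:
  assumes g: "lorentzian g" and e: "g e e < 0" "\<And>x. g x e = 0 \<Longrightarrow> 0 \<le> g x x"
    and x: "g x e = 0" "g x x = 0"
  shows "x = 0"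
proof -
  note gbil = lorentzian_bilinear[OF g] and gsym = lorentzian_sym[OF g]
  have perp: "g x y = 0" if y: "g y e = 0" for y
  proof (rule ccontr)
    assume xy: "g x y \<noteq> 0"
    \<comment> \<open>For this \<open>t\<close> the vector \<open>x + t y\<close>, which is orthogonal to \<open>e\<close>, would be time-like.\<close>
    define t where "t = - g x y / (g y y + 1)"
    have yy: "0 \<le> g y y" using e(2) y .
    have tq: "t * (g y y + 1) = - g x y" using yy by (simp add: t_def)
    have "g (1 *\<^sub>R x + t *\<^sub>R y) e = 0"
      using x y by (simp add: bilinear_ladd[OF gbil] bilinear_lmul[OF gbil])
    then have "0 \<le> g (1 *\<^sub>R x + t *\<^sub>R y) (1 *\<^sub>R x + t *\<^sub>R y)" by (rule e(2))
    also have "\<dots> = 2 * t * g x y + t\<^sup>2 * g y y"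
      using bilinear_sym_quadratic[OF gbil gsym, of 1 x t y] x by simp
    also have "\<dots> \<le> 2 * t * g x y + t\<^sup>2 * (g y y + 1)"
      by (simp add: distrib_left)
    also have "\<dots> = 2 * t * g x y + t * (t * (g y y + 1))"
      by (simp add: power2_eq_square)
    also have "\<dots> = t * g x y"
      by (simp add: tq)
    also have "\<dots> = - (g x y)\<^sup>2 / (g y y + 1)"
      by (simp add: t_def power2_eq_square)
    also have "\<dots> < 0"
      using yy xy by (simp add: divide_pos_pos)
    finally show False by simp
  qed
  have "g x z = 0" for z
  proof -
    define k where "k = g z e / g e e"
    have "g (z - k *\<^sub>R e) e = 0"
      using e(1) by (simp add: bilinear_lsub[OF gbil] bilinear_lmul[OF gbil] k_def)
    then have "g x (z - k *\<^sub>R e) = 0" by (rule perp)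
    then show ?thesis
      using x(1) gsym[of x e] by (simp add: bilinear_rsub[OF gbil] bilinear_rmul[OF gbil])
  qed
  then show ?thesis
    using g by (simp add: lorentzian_def lorentzian_on_def)
qed

lemma lorentzian_timelike_perp_positive_definite:
  assumes g: "lorentzian g" and e': "g e' e' < 0"
  shows "positive_definite_on g (gperp g {e'})"
  unfolding positive_definite_on_def
proof
  fix u assume "u \<in> gperp g {e'}"
  then have u: "g u e' = 0" by (simp add: gperp_def)
  note gbil = lorentzian_bilinear[OF g] and gsym = lorentzian_sym[OF g]
  obtain e where e: "g e e < 0" "\<And>x. g x e = 0 \<Longrightarrow> 0 \<le> g x x"
    using g by (auto simp: lorentzian_def lorentzian_on_def)
  define a where "a = g e' e"
  define b where "b = g u e"
  \<comment> \<open>\<open>a u - b e'\<close> is orthogonal to \<open>e\<close>, so it is space-like.\<close>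
  have "g (a *\<^sub>R u + (- b) *\<^sub>R e') e = 0"
    by (simp add: a_def b_def bilinear_lsub[OF gbil] bilinear_lmul[OF gbil])
  then have "0 \<le> g (a *\<^sub>R u + (- b) *\<^sub>R e') (a *\<^sub>R u + (- b) *\<^sub>R e')" by (rule e(2))
  also have "\<dots> = a\<^sup>2 * g u u + b\<^sup>2 * g e' e'"
    using bilinear_sym_quadratic[OF gbil gsym, of a u "- b" e'] u by simp
  finally have main: "0 \<le> a\<^sup>2 * g u u + b\<^sup>2 * g e' e'" .
  have bb: "b\<^sup>2 * g e' e' \<le> 0" using e' by (simp add: mult_nonneg_nonpos)
  have a: "a \<noteq> 0"
    using e(2)[of e'] e' by (auto simp: a_def)
  have uu: "0 \<le> g u u"
  proof (rule ccontr)
    assume "\<not> 0 \<le> g u u"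
    then have "a\<^sup>2 * g u u < 0" using a by (simp add: mult_pos_neg)
    then show False using main bb by linarith
  qed
  moreover have "u = 0" if "g u u = 0"
  proof -
    have "b\<^sup>2 * g e' e' = 0" using main bb that by simp
    then have "b = 0" using e' by simp
    then show ?thesis
      using lorentzian_witness_perp_null[OF g e] that by (simp add: b_def)
  qed
  ultimately show "0 \<le> g u u \<and> (g u u = 0 \<longrightarrow> u = 0)" by blast
qed

lemma lorentzian_null_orthogonal_parallel:
  assumes g: "lorentzian g" and null: "g v v = 0" "g w w = 0" and vw: "g v w = 0"
    and w: "w \<noteq> 0"
  shows "\<exists>k. v = k *\<^sub>R w"
proof -
  note gbil = lorentzian_bilinear[OF g] and gsym = lorentzian_sym[OF g]
  obtain e where e: "g e e < 0"
    using g by (auto simp: lorentzian_def lorentzian_on_def)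
  note pd = lorentzian_timelike_perp_positive_definite[OF g e]
  define a where "a = g v e"
  define b where "b = g w e"
  have "g (b *\<^sub>R v - a *\<^sub>R w) e = 0"
    by (simp add: a_def b_def bilinear_lsub[OF gbil] bilinear_lmul[OF gbil])
  moreover have "g (b *\<^sub>R v - a *\<^sub>R w) (b *\<^sub>R v - a *\<^sub>R w) = 0"
    using bilinear_sym_quadratic[OF gbil gsym, of b v "- a" w] null vw by simp
  ultimately have "b *\<^sub>R v - a *\<^sub>R w = 0"
    using pd unfolding positive_definite_on_def gperp_def by blast
  then have ab: "b *\<^sub>R v = a *\<^sub>R w" by simp
  have "b \<noteq> 0"
    using pd null(2) w by (auto simp: positive_definite_on_def gperp_def b_def)
  with ab have "v = (a / b) *\<^sub>R w"
    by (metis divide_inverse_commute eq_vector_fraction_iff scaleR_scaleR)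
  then show ?thesis ..
qed

lemma in_span_pair_iff: "x \<in> span {v, w} \<longleftrightarrow> (\<exists>a b. x = a *\<^sub>R v + b *\<^sub>R w)"
proof -
  have "x \<in> span {v, w} \<longleftrightarrow> (\<exists>a b. x - a *\<^sub>R v = b *\<^sub>R w)"
    by (auto simp: span_breakdown_eq span_singleton)
  then show ?thesis
    by (simp add: diff_eq_eq add.commute)
qed

lemma lorentzian_plane_span_null_pair:
  assumes gbil: "bilinear g" and gsym: "\<And>x y. g x y = g y x"
    and null: "g v v = 0" "g w w = 0" and vw: "g v w \<noteq> 0"
  shows "lorentzian_plane g (span {v, w})"
  unfolding lorentzian_plane_def lorentzian_on_def
proof (intro conjI)
  note gl = bilinear_ladd[OF gbil] bilinear_radd[OF gbil] bilinear_lmul[OF gbil]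
    bilinear_rmul[OF gbil] bilinear_rsub[OF gbil]
  let ?c = "g v w"
  have "v \<notin> span {w}"
    using vw null(2) by (auto simp: span_singleton bilinear_lmul[OF gbil])
  moreover have "w \<noteq> 0" "v \<noteq> w"
    using vw null(2) by (auto simp: bilinear_rzero[OF gbil])
  ultimately have "independent {v, w}" "card {v, w} = 2"
    by (simp_all add: independent_insert)
  then show "dim (span {v, w}) = 2"
    using dim_span_eq_card_independent by metis
  show "subspace (span {v, w})" by (rule subspace_span)
  show "\<forall>x\<in>span {v, w}. \<forall>y\<in>span {v, w}. g x y = g y x" using gsym by blast
  show "\<forall>x\<in>span {v, w}. (\<forall>y\<in>span {v, w}. g x y = 0) \<longrightarrow> x = 0"
  proof (intro ballI impI)
    fix x assume "x \<in> span {v, w}" and h: "\<forall>y\<in>span {v, w}. g x y = 0"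
    then obtain a b where x: "x = a *\<^sub>R v + b *\<^sub>R w" by (auto simp: in_span_pair_iff)
    have "g x v = 0" "g x w = 0" using h by (auto intro: span_base)
    then have "a = 0" "b = 0"
      using null vw gsym[of w v] by (simp_all add: x gl)
    then show "x = 0" by (simp add: x)
  qed
  show "\<exists>e\<in>span {v, w}. g e e < 0 \<and> (\<forall>x\<in>span {v, w}. g x e = 0 \<longrightarrow> 0 \<le> g x x)"
  proof (intro bexI conjI ballI impI)
    let ?e = "1 *\<^sub>R v + (- ?c) *\<^sub>R w"
    show "?e \<in> span {v, w}" unfolding in_span_pair_iff by blast
    have "0 < ?c * ?c" using vw by (metis not_real_square_gt_zero)
    then show "g ?e ?e < 0"
      using bilinear_sym_quadratic[OF gbil gsym, of 1 v "- ?c" w] null by simp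
    fix x assume "x \<in> span {v, w}" and xe: "g x ?e = 0"
    then obtain a b where x: "x = a *\<^sub>R v + b *\<^sub>R w" by (auto simp: in_span_pair_iff)
    have "g x ?e = ?c * (b - a * ?c)"
      using null gsym[of w v] by (simp add: x gl algebra_simps)
    then have "b = a * ?c" using xe vw by simp
    then have "g x x = 2 * (a * ?c)\<^sup>2"
      using bilinear_sym_quadratic[OF gbil gsym, of a v b w] null
      by (simp add: x power2_eq_square)
    then show "0 \<le> g x x" by simp
  qed
qed

lemma subspace_gperp: "bilinear g \<Longrightarrow> subspace (gperp g S)"
  by (auto simp: subspace_def gperp_def bilinear_ladd bilinear_lmul bilinear_lzero)

lemma gperp_span: "bilinear g \<Longrightarrow> gperp g (span S) = gperp g S"
proof
  assume g: "bilinear g"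
  show "gperp g S \<subseteq> gperp g (span S)"
  proof
    fix u assume "u \<in> gperp g S"
    moreover have "linear (g u)" using g by (simp add: bilinear_def)
    ultimately show "u \<in> gperp g (span S)"
      by (auto simp: gperp_def intro: linear_eq_0_on_span)
  qed
qed (auto simp: gperp_def intro: span_base)

lemma gproj_eqI:
  assumes g: "bilinear g" and U: "subspace U" "positive_definite_on g U"
    and y: "y \<in> U" "\<And>u. u \<in> U \<Longrightarrow> g (x - y) u = 0"
  shows "gproj g U x = y"
  unfolding gproj_def
proof (rule the_equality)
  show "y \<in> U \<and> (\<forall>u\<in>U. g (x - y) u = 0)" using y by blast
next
  fix y' assume y': "y' \<in> U \<and> (\<forall>u\<in>U. g (x - y') u = 0)"
  have d: "y' - y \<in> U" using y' y(1) U(1) by (simp add: subspace_diff)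
  have "g (y' - y) (y' - y) = g (x - y) (y' - y) - g (x - y') (y' - y)"
    by (simp add: bilinear_lsub[OF g] algebra_simps)
  also have "\<dots> = 0" using y(2)[OF d] y' d by simp
  finally have "g (y' - y) (y' - y) = 0" .
  then have "y' - y = 0"
    using U(2) d unfolding positive_definite_on_def by blast
  then show "y' = y" by simp
qed

lemma null_frame_perp_positive_definite:
  assumes g: "lorentzian g" and null: "g v v = 0" "g w w = 0" and vw: "g v w < 0"
  shows "positive_definite_on g (gperp g (span {v, w}))"
proof -
  note gbil = lorentzian_bilinear[OF g] and gsym = lorentzian_sym[OF g]
  have "g (v + w) (v + w) < 0"
    using null vw gsym[of w v] by (simp add: bilinear_ladd[OF gbil] bilinear_radd[OF gbil])
  moreover have "gperp g (span {v, w}) \<subseteq> gperp g {v + w}"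
    unfolding gperp_span[OF gbil] by (auto simp: gperp_def bilinear_radd[OF gbil])
  ultimately show ?thesis
    using lorentzian_timelike_perp_positive_definite[OF g] by (auto simp: positive_definite_on_def)
qed

lemma null_frame_proj_in_perp:
  assumes gbil: "bilinear g" and gsym: "g w v = g v w"
    and null: "g v v = 0" "g w w = 0" and vw: "g v w = - 1"
  shows "x + g x w *\<^sub>R v + g x v *\<^sub>R w \<in> gperp g (span {v, w})"
  unfolding gperp_span[OF gbil] using null vw gsym
  by (simp add: gperp_def bilinear_ladd[OF gbil] bilinear_lmul[OF gbil])

lemma gproj_null_frame:
  assumes g: "lorentzian g" and null: "g v v = 0" "g w w = 0" and vw: "g v w = - 1"
  shows "gproj g (gperp g (span {v, w})) x = x + g x w *\<^sub>R v + g x v *\<^sub>R w"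
proof (rule gproj_eqI)
  note gbil = lorentzian_bilinear[OF g] and gsym = lorentzian_sym[OF g]
  show "bilinear g" by (rule gbil)
  show "subspace (gperp g (span {v, w}))" by (rule subspace_gperp[OF gbil])
  show "positive_definite_on g (gperp g (span {v, w}))"
    by (rule null_frame_perp_positive_definite) (use g null vw in auto)
  show "x + g x w *\<^sub>R v + g x v *\<^sub>R w \<in> gperp g (span {v, w})"
    by (rule null_frame_proj_in_perp[OF gbil gsym null vw])
  fix u assume "u \<in> gperp g (span {v, w})"
  then have "g v u = 0" "g w u = 0"
    unfolding gperp_span[OF gbil] using gsym by (auto simp: gperp_def)
  then show "g (x - (x + g x w *\<^sub>R v + g x v *\<^sub>R w)) u = 0"
    by (simp add: bilinear_ladd[OF gbil] bilinear_lmul[OF gbil] bilinear_lsub[OF gbil]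
        bilinear_lneg[OF gbil])
qed

lemma flat_form_max_rank_kernel_in_right_kernel:
  fixes \<beta> :: "'v::euclidean_space \<Rightarrow> 'v \<Rightarrow> 'l::euclidean_space \<times> 'l"
  assumes g: "bilinear g" and R: "positive_definite_on g R"
    and \<beta>: "bilinear \<beta>" "flat_form (wform g) \<beta>" "\<And>X Y. \<beta> X Y \<in> R \<times> R"
    and sym: "\<And>X Y. fst (\<beta> Y X) = fst (\<beta> X Y)" and skew: "\<And>X Y. snd (\<beta> Y X) = - snd (\<beta> X Y)"
    and max: "\<And>X. dim (range (\<beta> X)) \<le> dim (range (\<beta> X0))" and Y: "\<beta> X0 Y = 0"
  shows "Y \<in> right_kernel \<beta>"
proof -
  have flat: "wform g (\<beta> X Y) (\<beta> Z T) = wform g (\<beta> X T) (\<beta> Z Y)" for X Y Z T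
    using \<beta>(2) by (simp add: flat_form_def)
  have pos: "0 \<le> g u u" "g u u = 0 \<Longrightarrow> u = 0" if "u \<in> R" for u
    using R that by (auto simp: positive_definite_on_def)
  have fst_R: "fst (\<beta> X Y) \<in> R" and snd_R: "snd (\<beta> X Y) \<in> R" for X Y
    using \<beta>(3)[of X Y] by (auto simp: mem_Times_iff)
  have "2 *\<^sub>R snd (\<beta> Y Y) = 0"
    using skew[of Y Y] by (metis scaleR_2 add.right_inverse)
  then have snd_YY: "snd (\<beta> Y Y) = 0" by simp
  \<comment> \<open>By maximality \<open>\<beta> Y Y\<close> lies in the range of \<open>\<beta> X0\<close>, which flatness makes
    orthogonal to it.\<close>
  obtain T where T: "\<beta> Y Y = \<beta> X0 T"
    using bilinear_max_rank_kernel_image[OF \<beta>(1) max Y] by blast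
  have "wform g (\<beta> Y Y) (\<beta> Y Y) = wform g (\<beta> Y T) (\<beta> X0 Y)"
    using flat[of Y Y X0 T] T by simp
  then have "g (fst (\<beta> Y Y)) (fst (\<beta> Y Y)) = 0"
    using Y snd_YY by (simp add: wform_def bilinear_rzero[OF g] bilinear_lzero[OF g])
  then have YY: "\<beta> Y Y = 0"
    using pos(2)[OF fst_R] snd_YY by (simp add: prod_eq_iff)
  show ?thesis
    unfolding right_kernel_def
  proof (intro CollectI allI)
    fix Z
    have "g (fst (\<beta> Z Y)) (fst (\<beta> Z Y)) + g (snd (\<beta> Z Y)) (snd (\<beta> Z Y))
        = wform g (\<beta> Z Y) (\<beta> Y Z)"
      using sym[of Z Y] skew[of Z Y] by (simp add: wform_def bilinear_rneg[OF g])
    also have "\<dots> = wform g (\<beta> Z Z) (\<beta> Y Y)"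
      by (rule flat)
    also have "\<dots> = 0"
      using YY by (simp add: wform_def bilinear_rzero[OF g])
    finally show "\<beta> Z Y = 0"
      using pos[OF fst_R] pos[OF snd_R] by (smt (verit) prod_eq_iff fst_zero snd_zero)
  qed
qed

lemma flat_form_dim_right_kernel:
  fixes \<beta> :: "'v::euclidean_space \<Rightarrow> 'v \<Rightarrow> 'l::euclidean_space \<times> 'l"
  assumes g: "bilinear g" and R: "subspace R" "positive_definite_on g R"
    and \<beta>: "bilinear \<beta>" "flat_form (wform g) \<beta>" "\<And>X Y. \<beta> X Y \<in> R \<times> R"
    and sym: "\<And>X Y. fst (\<beta> Y X) = fst (\<beta> X Y)" and skew: "\<And>X Y. snd (\<beta> Y X) = - snd (\<beta> X Y)"
  shows "DIM('v) \<le> dim (right_kernel \<beta>) + 2 * dim R"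
proof -
  obtain X0 where max: "\<And>X. dim (range (\<beta> X)) \<le> dim (range (\<beta> X0))"
    using ex_has_greatest_nat[of "\<lambda>_. True" 0 "\<lambda>X. dim (range (\<beta> X))" "Suc DIM('l \<times> 'l)"]
    by (metis dim_subset_UNIV le_imp_less_Suc)
  have "DIM('v) \<le> dim {Y. \<beta> X0 Y = 0} + dim (range (\<beta> X0))"
    using \<beta>(1) by (intro dim_le_dim_kernel_add_dim_range) (simp add: bilinear_def)
  moreover have "dim {Y. \<beta> X0 Y = 0} \<le> dim (right_kernel \<beta>)"
    using flat_form_max_rank_kernel_in_right_kernel[OF g R(2) \<beta> sym skew max]
    by (intro dim_subset) blast
  moreover have "dim (range (\<beta> X0)) \<le> dim (R \<times> R)"
    using \<beta>(3) by (intro dim_subset) blast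
  moreover have "dim (R \<times> R) = 2 * dim R"
    using dim_Times[OF R(1) R(1)] by simp
  ultimately show ?thesis by linarith
qed

lemma bilinear_assoc_form:
  assumes J: "linear J" and \<alpha>: "bilinear \<alpha>"
  shows "bilinear (assoc_form J \<alpha>)"
  unfolding bilinear_def
proof (intro conjI allI)
  note al = bilinear_ladd[OF \<alpha>] bilinear_radd[OF \<alpha>] bilinear_lmul[OF \<alpha>] bilinear_rmul[OF \<alpha>]
  note Jl = linear_add[OF J] linear_scale[OF J]
  show "linear (assoc_form J \<alpha> X)" for X
    by (rule linearI) (simp_all add: assoc_form_def al Jl algebra_simps)
  show "linear (\<lambda>X. assoc_form J \<alpha> X Y)" for Y
    by (rule linearI) (simp_all add: assoc_form_def al Jl algebra_simps)
qed

locale flat_assoc_setting =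
  fixes J :: "'v::euclidean_space \<Rightarrow> 'v" and g :: "'l::euclidean_space \<Rightarrow> 'l \<Rightarrow> real"
    and \<alpha> :: "'v \<Rightarrow> 'v \<Rightarrow> 'l" and v w :: 'l
  assumes J_lin: "linear J" and J_sq: "\<And>X. J (J X) = - X"
    and J_isom: "\<And>X Y. inner (J X) (J Y) = inner X Y"
    and g_lor: "lorentzian g"
    and \<alpha>_bil: "bilinear \<alpha>" and \<alpha>_sym: "\<And>X Y. \<alpha> X Y = \<alpha> Y X"
    and w_light: "g w w = 0" "w \<noteq> 0"
    and w_prop: "\<And>X Y. g (\<alpha> X Y) w = - inner X Y"
    and flat: "flat_form (wform g) (assoc_form J \<alpha>)"
    and v_light: "g v v = 0" "v \<noteq> 0"
    and v_in: "v \<in> fst ` form_span (assoc_form J \<alpha>)"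
    and v_perp: "(v, 0) \<in> gperp (wform g) (form_span (assoc_form J \<alpha>))"
begin

abbreviation \<beta> :: "'v \<Rightarrow> 'v \<Rightarrow> 'l \<times> 'l" where "\<beta> \<equiv> assoc_form J \<alpha>"

lemmas gbil = lorentzian_bilinear[OF g_lor] and gsym = lorentzian_sym[OF g_lor]

lemma snd_\<beta>: "snd (\<beta> X Y) = fst (\<beta> X (J Y))"
  by (simp add: assoc_form_def J_sq bilinear_rneg[OF \<alpha>_bil])

lemma fst_\<beta>_sym: "fst (\<beta> Y X) = fst (\<beta> X Y)"
  using \<alpha>_sym by (simp add: assoc_form_def)

lemma snd_\<beta>_skew: "snd (\<beta> Y X) = - snd (\<beta> X Y)"
  using \<alpha>_sym[of Y "J X"] \<alpha>_sym[of "J Y" X] by (simp add: assoc_form_def)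

lemma g_fst_\<beta>_w: "g (fst (\<beta> X Y)) w = - 2 * inner X Y"
  using w_prop J_isom by (simp add: assoc_form_def bilinear_ladd[OF gbil])

lemma g_snd_\<beta>_w: "g (snd (\<beta> X Y)) w = - 2 * inner X (J Y)"
  by (simp add: snd_\<beta> g_fst_\<beta>_w)

lemma g_v_fst_\<beta>: "g v (fst (\<beta> X Y)) = 0"
proof -
  have "\<beta> X Y \<in> form_span \<beta>"
    unfolding form_span_def by (rule span_base) blast
  then show ?thesis
    using v_perp by (simp add: gperp_def wform_def bilinear_lzero[OF gbil])
qed

lemma g_v_snd_\<beta>: "g v (snd (\<beta> X Y)) = 0"
  by (simp add: snd_\<beta> g_v_fst_\<beta>)

lemma g_v_w_nonzero: "g v w \<noteq> 0"
proof
  assume "g v w = 0"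
  then obtain k where k: "v = k *\<^sub>R w"
    using lorentzian_null_orthogonal_parallel[OF g_lor v_light(1) w_light(1) _ w_light(2)] by blast
  obtain X :: 'v where X: "X \<in> Basis"
    using nonempty_Basis by blast
  have "0 = g v (fst (\<beta> X X))"
    by (simp add: g_v_fst_\<beta>)
  also have "\<dots> = - 2 * k"
    using g_fst_\<beta>_w[of X X] X gsym[of w] by (simp add: k bilinear_lmul[OF gbil])
  finally show False
    using k v_light(2) by simp
qed

lemma lorentzian_plane_v_w: "lorentzian_plane g (span {v, w})"
  by (rule lorentzian_plane_span_null_pair[OF gbil gsym v_light(1) w_light(1) g_v_w_nonzero])

definition v' :: 'l where "v' = (- 1 / g v w) *\<^sub>R v"

definition Lperp :: "'l set" where "Lperp = gperp g (span {v', w})"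

definition \<beta>\<^sub>1 :: "'v \<Rightarrow> 'v \<Rightarrow> 'l \<times> 'l" where
  "\<beta>\<^sub>1 = (\<lambda>X Y. (gproj g Lperp (fst (\<beta> X Y)), gproj g Lperp (snd (\<beta> X Y))))"

lemma g_v'_w: "g v' w = - 1"
  using g_v_w_nonzero by (simp add: v'_def bilinear_lmul[OF gbil] bilinear_lneg[OF gbil])

lemma g_v'_v': "g v' v' = 0"
  using v_light by (simp add: v'_def bilinear_lmul[OF gbil] bilinear_rmul[OF gbil]
      bilinear_lneg[OF gbil] bilinear_rneg[OF gbil])

lemma g_fst_\<beta>_v': "g (fst (\<beta> X Y)) v' = 0" and g_snd_\<beta>_v': "g (snd (\<beta> X Y)) v' = 0"
  using g_v_fst_\<beta> g_v_snd_\<beta> gsym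
  by (simp_all add: v'_def bilinear_rmul[OF gbil] bilinear_rneg[OF gbil])

lemma gproj_Lperp: "gproj g Lperp x = x + g x w *\<^sub>R v' + g x v' *\<^sub>R w"
  unfolding Lperp_def by (rule gproj_null_frame[OF g_lor g_v'_v' w_light(1) g_v'_w])

lemma gproj_Lperp_in: "gproj g Lperp x \<in> Lperp"
  by (subst gproj_Lperp, unfold Lperp_def)
    (rule null_frame_proj_in_perp[OF gbil gsym g_v'_v' w_light(1) g_v'_w])

lemma linear_gproj_Lperp: "linear (gproj g Lperp)"
  unfolding gproj_Lperp
  by (rule linearI) (simp_all add: bilinear_ladd[OF gbil] bilinear_lmul[OF gbil] algebra_simps)

lemma positive_definite_Lperp: "positive_definite_on g Lperp"
  unfolding Lperp_def by (rule null_frame_perp_positive_definite[OF g_lor g_v'_v' w_light(1)])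
    (simp add: g_v'_w)

lemma \<beta>_decomp: "\<beta> X Y = \<beta>\<^sub>1 X Y + ((2 * inner X Y) *\<^sub>R v', (2 * inner X (J Y)) *\<^sub>R v')"
  by (simp add: \<beta>\<^sub>1_def gproj_Lperp g_fst_\<beta>_w g_snd_\<beta>_w g_fst_\<beta>_v' g_snd_\<beta>_v')

lemma bilinear_\<beta>\<^sub>1: "bilinear \<beta>\<^sub>1"
proof -
  let ?P = "\<lambda>z. (gproj g Lperp (fst z), gproj g Lperp (snd z))"
  have P: "linear ?P"
    by (intro linearI)
      (simp_all add: linear_add[OF linear_gproj_Lperp] linear_scale[OF linear_gproj_Lperp])
  have "\<beta>\<^sub>1 X = ?P \<circ> \<beta> X" "(\<lambda>X. \<beta>\<^sub>1 X Y) = ?P \<circ> (\<lambda>X. \<beta> X Y)" for X Y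
    by (simp_all add: \<beta>\<^sub>1_def fun_eq_iff)
  then show ?thesis
    using bilinear_assoc_form[OF J_lin \<alpha>_bil] linear_compose[OF _ P]
    unfolding bilinear_def by metis
qed

lemma flat_\<beta>\<^sub>1: "flat_form (wform g) \<beta>\<^sub>1"
proof -
  have Lperp: "g u v' = 0" "g v' u = 0" if "u \<in> Lperp" for u
    using that gsym[of v' u] by (auto simp: Lperp_def gperp_def intro: span_base)
  \<comment> \<open>The correction terms are multiples of the null vector \<open>v'\<close>, which is orthogonal
    to \<open>Lperp\<close>.\<close>
  have "wform g (\<beta> X Y) (\<beta> Z T) = wform g (\<beta>\<^sub>1 X Y) (\<beta>\<^sub>1 Z T)" for X Y Z T
    unfolding \<beta>_decomp[of X Y] \<beta>_decomp[of Z T]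
    using Lperp gproj_Lperp_in g_v'_v'
    by (simp add: wform_def \<beta>\<^sub>1_def bilinear_ladd[OF gbil] bilinear_radd[OF gbil]
        bilinear_lmul[OF gbil] bilinear_rmul[OF gbil])
  then show ?thesis
    using flat by (simp add: flat_form_def)
qed

definition R :: "'l set" where "R = gproj g Lperp ` fst ` form_span \<beta>"

lemma subspace_fst_form_span: "subspace (fst ` form_span \<beta>)"
  unfolding form_span_def by (rule linear_subspace_image[OF linear_fst subspace_span])

lemma subspace_R: "subspace R"
  unfolding R_def by (rule linear_subspace_image[OF linear_gproj_Lperp subspace_fst_form_span])

lemma positive_definite_R: "positive_definite_on g R"
  using positive_definite_Lperp gproj_Lperp_in by (auto simp: R_def positive_definite_on_def)

lemma \<beta>\<^sub>1_in_R: "\<beta>\<^sub>1 X Y \<in> R \<times> R"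
proof -
  have "\<beta> X Y \<in> form_span \<beta>" for X Y
    unfolding form_span_def by (rule span_base) blast
  then have S: "fst (\<beta> X Y) \<in> fst ` form_span \<beta>" for X Y
    by (rule imageI)
  show ?thesis
    unfolding \<beta>\<^sub>1_def R_def snd_\<beta> mem_Times_iff fst_conv snd_conv
    using imageI[OF S, of "gproj g Lperp"] by simp
qed

lemma dim_R_less: "dim R < dim (fst ` form_span \<beta>)"
  unfolding R_def
proof (rule dim_image_less_if_kernel[OF linear_gproj_Lperp subspace_fst_form_span v_in v_light(2)])
  show "gproj g Lperp v = 0"
    using v_light(1) g_v_w_nonzero gsym[of v v']
    by (simp add: gproj_Lperp v'_def bilinear_rmul[OF gbil] bilinear_rneg[OF gbil])
qed

lemma dim_right_kernel_\<beta>\<^sub>1: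
  "DIM('v) + 2 \<le> dim (right_kernel \<beta>\<^sub>1) + 2 * dim (fst ` form_span \<beta>)"
proof -
  have "DIM('v) \<le> dim (right_kernel \<beta>\<^sub>1) + 2 * dim R"
  proof (rule flat_form_dim_right_kernel[OF gbil subspace_R positive_definite_R bilinear_\<beta>\<^sub>1
        flat_\<beta>\<^sub>1 \<beta>\<^sub>1_in_R])
    show "fst (\<beta>\<^sub>1 Y X) = fst (\<beta>\<^sub>1 X Y)" for X Y
      by (simp add: \<beta>\<^sub>1_def fst_\<beta>_sym)
    show "snd (\<beta>\<^sub>1 Y X) = - snd (\<beta>\<^sub>1 X Y)" for X Y
      by (simp add: \<beta>\<^sub>1_def snd_\<beta>_skew[of Y X] linear_neg[OF linear_gproj_Lperp])
  qed
  then show ?thesis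
    using dim_R_less by linarith
qed

end

theorem proposition5:
  fixes J :: "'v::euclidean_space \<Rightarrow> 'v"
    and g :: "'l::euclidean_space \<Rightarrow> 'l \<Rightarrow> real"
    and \<alpha> :: "'v \<Rightarrow> 'v \<Rightarrow> 'l"
    and v w :: 'l and n p :: nat
  assumes dimV: "DIM('v) = 2 * n"
    and J_lin: "linear J" and J_sq: "\<forall>X. J (J X) = - X"
    and J_isom: "\<forall>X Y. inner (J X) (J Y) = inner X Y"
    and dimL: "DIM('l) = p" and p2: "p \<ge> 2"
    and g_lor: "lorentzian g"
    and \<alpha>_bil: "bilinear \<alpha>" and \<alpha>_sym: "\<forall>X Y. \<alpha> X Y = \<alpha> Y X"
    and w_light: "g w w = 0" "w \<noteq> 0"
    and w_prop: "\<forall>X Y. g (\<alpha> X Y) w = - inner X Y"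
    and flat: "flat_form (wform g) (assoc_form J \<alpha>)"
    and degen: "degenerate_subspace (wform g) (form_span (assoc_form J \<alpha>))"
    and v_in: "v \<in> fst ` form_span (assoc_form J \<alpha>)"
    and v_light: "g v v = 0" "v \<noteq> 0"
    and v_null: "form_span (assoc_form J \<alpha>) \<inter> gperp (wform g) (form_span (assoc_form J \<alpha>))
                   = {(a *\<^sub>R v, b *\<^sub>R v) | a b. True}"
  shows "lorentzian_plane g (span {v, w}) \<and>
    (let v' = (- 1 / g v w) *\<^sub>R v;
         L = span {v', w};
         \<beta> = assoc_form J \<alpha>;
         \<beta>\<^sub>1 = (\<lambda>X Y. (gproj g (gperp g L) (fst (\<beta> X Y)), gproj g (gperp g L) (snd (\<beta> X Y))));
         s = dim (fst ` form_span \<beta>)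
     in g v' w = - 1 \<and>
        (\<forall>X Y. \<beta> X Y = \<beta>\<^sub>1 X Y + ((2 * inner X Y) *\<^sub>R v', (2 * inner X (J Y)) *\<^sub>R v')) \<and>
        (s \<le> n \<longrightarrow> dim (right_kernel \<beta>\<^sub>1) \<ge> 2 * n - 2 * s + 2))"
proof -
  have "(1 *\<^sub>R v, 0 *\<^sub>R v) \<in> {(a *\<^sub>R v, b *\<^sub>R v) | a b. True}" by blast
  then have "(v, 0) \<in> gperp (wform g) (form_span (assoc_form J \<alpha>))"
    using v_null by auto
  then interpret flat_assoc_setting J g \<alpha> v w
    using assms unfolding flat_assoc_setting_def by blast
  show ?thesis
    unfolding Let_def
    using lorentzian_plane_v_w g_v'_w \<beta>_decomp dim_right_kernel_\<beta>\<^sub>1 dimV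
    unfolding \<beta>\<^sub>1_def Lperp_def v'_def by auto
qed

end
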